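(* Let $\kappa\in\mathbb{N}$ with $\kappa\ge2$ and let $\mathsf{A}\in\mathscr{M}_\kappa^+$, with $(a,b,c)\in\mathbb{R}^3$ such that $\mathsf{A}=\mathsf{M}_\kappa(a,b,c)$. Then $a>\max\{|b|,|c|\}$, and the functions $f(a,b,c)=\frac{b(a-c)}{a^2-b^2}$ and $g(a,b,c)=\frac{ac-b^2}{a^2-b^2}$ satisfy $|f(a,b,c)|\le2$ and $|g(a,b,c)|\le1$.
   Context: $\mathsf{M}_\kappa(a,b,c)$ is the $(1+\kappa)\times(1+\kappa)$ matrix indexed by $\{0,\dots,\kappa\}$ with $(i,j)$ entry $a$ if $i=j$, $b$ if $i\neq j$ and ($i=0$ or $j=0$), and $c$ otherwise. $\mathscr{M}_\kappa^+$ is the set of positive definite matrices of the form $\mathsf{M}_\kappa(a,b,c)$. *)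

theory Defs
  imports "Jordan_Normal_Form.Matrix"
begin

definition M_mat :: "nat \<Rightarrow> real \<Rightarrow> real \<Rightarrow> real \<Rightarrow> real mat" where
  "M_mat \<kappa> a b c = mat (Suc \<kappa>) (Suc \<kappa>)
     (\<lambda>(i, j). if i = j then a else if i = 0 \<or> j = 0 then b else c)"

definition pos_def_mat :: "real mat \<Rightarrow> bool" where
  "pos_def_mat A \<longleftrightarrow> A \<in> carrier_mat (dim_row A) (dim_row A) \<and> transpose_mat A = A \<and>
     (\<forall>v \<in> carrier_vec (dim_row A). v \<noteq> 0\<^sub>v (dim_row A) \<longrightarrow> 0 < v \<bullet> (A *\<^sub>v v))"

definition M_plus :: "nat \<Rightarrow> real mat set" where
  "M_plus \<kappa> = {A. pos_def_mat A \<and> (\<exists>a b c. A = M_mat \<kappa> a b c)}"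

definition f_fun :: "real \<Rightarrow> real \<Rightarrow> real \<Rightarrow> real" where
  "f_fun a b c = b * (a - c) / (a\<^sup>2 - b\<^sup>2)"

definition g_fun :: "real \<Rightarrow> real \<Rightarrow> real \<Rightarrow> real" where
  "g_fun a b c = (a * c - b\<^sup>2) / (a\<^sup>2 - b\<^sup>2)"

end

theory Submission
  imports Defs
begin

(* Positive definiteness of M_kappa(a,b,c) passes to its leading 3 x 3 block M_2(a,b,c).
   Its quadratic form at (1,+-1,0) and (0,1,+-1) gives a > |b| and a > |c|, and at
   (a+c,-b,-b) it equals (a+c)(a(a+c) - 2b^2), so a(a+c) > 2b^2.  The bounds follow:
   |ac - b^2| <= a^2 - b^2 uses c < a on one side and a(a+c) > 2b^2 on the other, and
   |b|(a-c) <= a(a-c) <= 2(a^2 - b^2) is again a(a+c) > 2b^2. *)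

definition vec3 :: "nat \<Rightarrow> real \<Rightarrow> real \<Rightarrow> real \<Rightarrow> real vec" where
  "vec3 n x y z = vec n (\<lambda>i. if i = 0 then x else if i = 1 then y else if i = 2 then z else 0)"

lemma vec3_carrier [simp]: "vec3 n x y z \<in> carrier_vec n"
  by (simp add: vec3_def)

lemma vec3_eq_zero_iff:
  assumes "3 \<le> n"
  shows "vec3 n x y z = 0\<^sub>v n \<longleftrightarrow> x = 0 \<and> y = 0 \<and> z = 0"
proof
  assume "vec3 n x y z = 0\<^sub>v n"
  then have "vec3 n x y z $ 0 = 0" "vec3 n x y z $ 1 = 0" "vec3 n x y z $ 2 = 0"
    using assms by simp_all
  then show "x = 0 \<and> y = 0 \<and> z = 0"
    using assms by (auto simp: vec3_def)
qed (auto simp: vec3_def)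

lemma scalar_prod_vec3:
  assumes "3 \<le> n" and "w \<in> carrier_vec n"
  shows "w \<bullet> vec3 n x y z = w $ 0 * x + w $ 1 * y + w $ 2 * z"
proof -
  have "w \<bullet> vec3 n x y z = (\<Sum>i\<in>{0..<n}. w $ i * vec3 n x y z $ i)"
    by (simp add: scalar_prod_def vec3_def)
  also have "\<dots> = (\<Sum>i\<in>{0,1,2}. w $ i * vec3 n x y z $ i)"
    using assms(1) by (intro sum.mono_neutral_right) (auto simp: vec3_def)
  also have "\<dots> = w $ 0 * x + w $ 1 * y + w $ 2 * z"
    using assms(1) by (simp add: vec3_def)
  finally show ?thesis .
qed

definition M2_quadratic_form :: "real \<Rightarrow> real \<Rightarrow> real \<Rightarrow> real \<Rightarrow> real \<Rightarrow> real \<Rightarrow> real" where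
  "M2_quadratic_form a b c x y z = a * (x\<^sup>2 + y\<^sup>2 + z\<^sup>2) + 2 * b * x * (y + z) + 2 * c * y * z"

lemma M_mat_carrier [simp]: "M_mat \<kappa> a b c \<in> carrier_mat (Suc \<kappa>) (Suc \<kappa>)"
  by (simp add: M_mat_def)

lemma M_mat_index [simp]:
  "i \<le> \<kappa> \<Longrightarrow> j \<le> \<kappa> \<Longrightarrow>
    M_mat \<kappa> a b c $$ (i, j) = (if i = j then a else if i = 0 \<or> j = 0 then b else c)"
  by (simp add: M_mat_def)

lemma M_mat_quadratic_form_vec3:
  fixes x y z :: real
  assumes "2 \<le> \<kappa>"
  defines "v \<equiv> vec3 (Suc \<kappa>) x y z"
  shows "v \<bullet> (M_mat \<kappa> a b c *\<^sub>v v) = M2_quadratic_form a b c x y z"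
proof -
  let ?M = "M_mat \<kappa> a b c"
  have n: "3 \<le> Suc \<kappa>" using assms(1) by simp
  have v: "v \<in> carrier_vec (Suc \<kappa>)" by (simp add: v_def)
  have Mv: "?M *\<^sub>v v \<in> carrier_vec (Suc \<kappa>)" using mult_mat_vec_carrier[OF M_mat_carrier v] .
  have "(?M *\<^sub>v v) $ i = ?M $$ (i, 0) * x + ?M $$ (i, 1) * y + ?M $$ (i, 2) * z"
    if "i < Suc \<kappa>" for i
    using that n scalar_prod_vec3[OF n, of "row ?M i"] carrier_matD[OF M_mat_carrier]
    by (simp add: v_def)
  then have "(?M *\<^sub>v v) $ 0 = a * x + b * y + b * z"
    and "(?M *\<^sub>v v) $ 1 = b * x + a * y + c * z"
    and "(?M *\<^sub>v v) $ 2 = b * x + c * y + a * z"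
    using n by simp_all
  moreover have "v \<bullet> (?M *\<^sub>v v) = (?M *\<^sub>v v) $ 0 * x + (?M *\<^sub>v v) $ 1 * y + (?M *\<^sub>v v) $ 2 * z"
    using comm_scalar_prod[OF v Mv] scalar_prod_vec3[OF n Mv] by (simp add: v_def)
  ultimately show ?thesis
    by (simp add: M2_quadratic_form_def power2_eq_square algebra_simps)
qed

lemma pos_def_M_mat_imp_M2_quadratic_form_pos:
  assumes "2 \<le> \<kappa>" and "pos_def_mat (M_mat \<kappa> a b c)" and "(x, y, z) \<noteq> (0, 0, 0)"
  shows "0 < M2_quadratic_form a b c x y z"
proof -
  let ?v = "vec3 (Suc \<kappa>) x y z"
  have "dim_row (M_mat \<kappa> a b c) = Suc \<kappa>"
    by (simp add: M_mat_def)
  moreover have "?v \<noteq> 0\<^sub>v (Suc \<kappa>)"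
    using assms(1,3) by (simp add: vec3_eq_zero_iff)
  ultimately have "0 < ?v \<bullet> (M_mat \<kappa> a b c *\<^sub>v ?v)"
    using assms(2) vec3_carrier unfolding pos_def_mat_def by metis
  then show ?thesis
    using M_mat_quadratic_form_vec3[OF assms(1)] by simp
qed

lemma M2_quadratic_form_pos_imp_bounds:
  fixes a b c :: real
  assumes pos: "\<And>x y z. (x, y, z) \<noteq> (0, 0, 0) \<Longrightarrow> 0 < M2_quadratic_form a b c x y z"
  shows "\<bar>b\<bar> < a" and "\<bar>c\<bar> < a" and "2 * b\<^sup>2 < a * (a + c)"
proof -
  have "0 < a + b" "0 < a - b" "0 < a + c" "0 < a - c"
    using pos[of 1 1 0] pos[of 1 "-1" 0] pos[of 0 1 1] pos[of 0 1 "-1"]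
    by (simp_all add: M2_quadratic_form_def)
  then show "\<bar>b\<bar> < a" and "\<bar>c\<bar> < a" by simp_all
  have "0 < M2_quadratic_form a b c (a + c) (- b) (- b)"
    using pos \<open>0 < a + c\<close> by simp
  also have "\<dots> = (a + c) * (a * (a + c) - 2 * b\<^sup>2)"
    by (simp add: M2_quadratic_form_def power2_eq_square algebra_simps)
  finally show "2 * b\<^sup>2 < a * (a + c)"
    using \<open>0 < a + c\<close> by (simp add: zero_less_mult_iff)
qed

lemma f_fun_g_fun_bounds:
  fixes a b c :: real
  assumes "\<bar>b\<bar> < a" and "\<bar>c\<bar> < a" and "2 * b\<^sup>2 < a * (a + c)"
  shows "\<bar>f_fun a b c\<bar> \<le> 2" and "\<bar>g_fun a b c\<bar> \<le> 1"
proof -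
  have "0 < (a + b) * (a - b)"
    using assms(1) by (simp add: abs_less_iff)
  then have den: "0 < a\<^sup>2 - b\<^sup>2"
    by (simp add: power2_eq_square algebra_simps)
  have "a * c \<le> a * a"
    using assms(1,2) by (intro mult_left_mono) auto
  then have "\<bar>a * c - b\<^sup>2\<bar> \<le> a\<^sup>2 - b\<^sup>2"
    using assms(3) by (simp add: abs_le_iff power2_eq_square algebra_simps)
  then show "\<bar>g_fun a b c\<bar> \<le> 1"
    using den by (simp add: g_fun_def abs_divide divide_le_eq)
  have "\<bar>b * (a - c)\<bar> = \<bar>b\<bar> * (a - c)"
    using assms(2) by (simp add: abs_mult)
  also have "\<dots> \<le> a * (a - c)"
    using assms(1,2) by (intro mult_right_mono) auto
  also have "\<dots> \<le> 2 * (a\<^sup>2 - b\<^sup>2)"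
    using assms(3) by (simp add: power2_eq_square algebra_simps)
  finally show "\<bar>f_fun a b c\<bar> \<le> 2"
    using den by (simp add: f_fun_def abs_divide divide_le_eq)
qed

theorem lemma4p8:
  fixes \<kappa> :: nat and A :: "real mat" and a b c :: real
  assumes "\<kappa> \<ge> 2"
    and "A \<in> M_plus \<kappa>"
    and "A = M_mat \<kappa> a b c"
  shows "a > max \<bar>b\<bar> \<bar>c\<bar> \<and> \<bar>f_fun a b c\<bar> \<le> 2 \<and> \<bar>g_fun a b c\<bar> \<le> 1"
proof -
  have "pos_def_mat (M_mat \<kappa> a b c)"
    using assms(2,3) by (simp add: M_plus_def)
  then have "\<bar>b\<bar> < a" "\<bar>c\<bar> < a" "2 * b\<^sup>2 < a * (a + c)"
    using M2_quadratic_form_pos_imp_bounds pos_def_M_mat_imp_M2_quadratic_form_pos[OF assms(1)] by blast+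
  then show ?thesis
    using f_fun_g_fun_bounds by simp
qed

end
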